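(* Let $X$ be a minimal dendric shift over $\mathcal{A}_3=\{1,2,3\}$, let $\boldsymbol\sigma=(\sigma_n)_{n\ge1}$ be a primitive $\Sigma_3\mathcal{S}_3\Sigma_3$-adic representation of $X$, and let $\lambda_1,\lambda_2,\lambda_3$ be the letter frequencies of $X$. Suppose $\sigma_1\in\{\alpha,\pi_{132}\eta\pi_{321},\pi_{312}\beta\pi_{213},\pi_{213}\gamma\}\cup\{\pi_{213}\delta^{(k)}:k\ge1\}$. Then: $\lambda_1>\lambda_2+\lambda_3$ iff $\sigma_1=\alpha$; $\lambda_2,\lambda_3<\lambda_1<\lambda_2+\lambda_3$ iff $\sigma_1=\pi_{132}\eta\pi_{321}$; $\lambda_2<\lambda_1<\lambda_3$ iff $\sigma_1=\pi_{312}\beta\pi_{213}$; $\lambda_3<\lambda_1<\lambda_2$ iff $\sigma_1=\pi_{213}\gamma$; and, for $k\ge1$, ($\lambda_1<\lambda_2$, $\lambda_1<\lambda_3$ and $k\lambda_1<\lambda_3<(k+1)\lambda_1$) iff $\sigma_1=\pi_{213}\delta^{(k)}$.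
   Context: A shift space over $\mathcal{A}$ is a closed shift-invariant $X\subseteq\mathcal{A}^{\mathbb{Z}}$ in which all letters occur, with factor set $\mathcal{L}(X)$; minimal if its only closed shift-invariant subsets are $\emptyset,X$; dendric if for each $w\in\mathcal{L}(X)$ the bipartite graph with left vertices $\{a:aw\in\mathcal{L}(X)\}$, right vertices $\{b:wb\in\mathcal{L}(X)\}$ and edges $\{a,b\}$ for $awb\in\mathcal{L}(X)$ is a tree. $X$ has letter frequencies $(\lambda_a)_{a\in\mathcal{A}}$ if for all $x\in X$ and $a$, $\lim_n|x_1\cdots x_n|_a/n=\lambda_a$; minimal dendric shifts over $\mathcal{A}_3$ are known to be uniquely ergodic and hence to have letter frequencies. A directive sequence $(\sigma_n)$ of non-erasing morphisms is primitive if for each $n$ there is $N>n$ such that every letter occurs in $\sigma_n\cdots\sigma_{N-1}(b)$ for all letters $b$; it represents the shift of bi-infinite words all of whose factors occur in some $\sigma_1\cdots\sigma_{N-1}(a)$. $\pi_{abc}$ is the morphism $1\mapsto a,2\mapsto b,3\mapsto c$; $\Sigma_3$ the set of these; juxtaposition is composition. $\mathcal{S}_3=\{\alpha,\beta,\gamma,\eta\}\cup\{\delta^{(k)},\zeta^{(k)}:k\ge1\}$ with $\alpha:1\mapsto1,2\mapsto12,3\mapsto13$; $\beta:1\mapsto1,2\mapsto12,3\mapsto132$; $\gamma:1\mapsto1,2\mapsto12,3\mapsto123$; $\delta^{(k)}:1\mapsto1,2\mapsto123^k,3\mapsto123^{k+1}$; $\zeta^{(k)}:1\mapsto13^k,2\mapsto12,3\mapsto13^{k+1}$;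 $\eta:1\mapsto13,2\mapsto12,3\mapsto123$; a $\Sigma_3\mathcal{S}_3\Sigma_3$-adic representation has each $\sigma_n=\pi\sigma\pi'$ with $\pi,\pi'\in\Sigma_3$, $\sigma\in\mathcal{S}_3$. *)

theory Defs
  imports Complex_Main
begin

datatype letter = L1 | L2 | L3

type_synonym morph = "letter \<Rightarrow> letter list"
type_synonym biword = "int \<Rightarrow> letter"

definition morph_word :: "morph \<Rightarrow> letter list \<Rightarrow> letter list" where
  "morph_word s w = concat (map s w)"

text \<open>Juxtaposition = composition: (s t)(a) = s(t(a)).\<close>
definition mcomp :: "morph \<Rightarrow> morph \<Rightarrow> morph" where
  "mcomp s t = (\<lambda>a. morph_word s (t a))"

definition mid :: morph where "mid = (\<lambda>a. [a])"

definition non_erasing :: "morph \<Rightarrow> bool" where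
  "non_erasing s \<longleftrightarrow> (\<forall>a. s a \<noteq> [])"

fun comps :: "(nat \<Rightarrow> morph) \<Rightarrow> nat \<Rightarrow> nat \<Rightarrow> morph" where
  "comps sig n 0 = mid"
| "comps sig n (Suc k) = mcomp (sig n) (comps sig (Suc n) k)"

definition pi :: "letter \<Rightarrow> letter \<Rightarrow> letter \<Rightarrow> morph" where
  "pi a b c = (\<lambda>x. case x of L1 \<Rightarrow> [a] | L2 \<Rightarrow> [b] | L3 \<Rightarrow> [c])"

definition Sigma3 :: "morph set" where
  "Sigma3 = {pi a b c | a b c. distinct [a, b, c]}"

definition alpha :: morph where
  "alpha = (\<lambda>x. case x of L1 \<Rightarrow> [L1] | L2 \<Rightarrow> [L1, L2] | L3 \<Rightarrow> [L1, L3])"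
definition beta :: morph where
  "beta = (\<lambda>x. case x of L1 \<Rightarrow> [L1] | L2 \<Rightarrow> [L1, L2] | L3 \<Rightarrow> [L1, L3, L2])"
definition gamma :: morph where
  "gamma = (\<lambda>x. case x of L1 \<Rightarrow> [L1] | L2 \<Rightarrow> [L1, L2] | L3 \<Rightarrow> [L1, L2, L3])"
definition delta :: "nat \<Rightarrow> morph" where
  "delta k = (\<lambda>x. case x of L1 \<Rightarrow> [L1] | L2 \<Rightarrow> [L1, L2] @ replicate k L3
                             | L3 \<Rightarrow> [L1, L2] @ replicate (k+1) L3)"
definition zeta :: "nat \<Rightarrow> morph" where
  "zeta k = (\<lambda>x. case x of L1 \<Rightarrow> [L1] @ replicate k L3 | L2 \<Rightarrow> [L1, L2]
                            | L3 \<Rightarrow> [L1] @ replicate (k+1) L3)"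
definition eta :: morph where
  "eta = (\<lambda>x. case x of L1 \<Rightarrow> [L1, L3] | L2 \<Rightarrow> [L1, L2] | L3 \<Rightarrow> [L1, L2, L3])"

definition S3 :: "morph set" where
  "S3 = {alpha, beta, gamma, eta} \<union> {delta k | k. k \<ge> 1} \<union> {zeta k | k. k \<ge> 1}"

definition shift :: "biword \<Rightarrow> biword" where
  "shift x = (\<lambda>i. x (i + 1))"

definition factor_at :: "biword \<Rightarrow> int \<Rightarrow> nat \<Rightarrow> letter list" where
  "factor_at x i n = map (\<lambda>k. x (i + int k)) [0..<n]"

definition lang :: "biword set \<Rightarrow> letter list set" where
  "lang X = {w. \<exists>x\<in>X. \<exists>i. w = factor_at x i (length w)}"

text \<open>Closed in the product topology of the discrete topology on letters.\<close>
definition closed_set :: "biword set \<Rightarrow> bool" where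
  "closed_set X \<longleftrightarrow>
     (\<forall>x. (\<forall>n::nat. \<exists>y\<in>X. \<forall>i. \<bar>i\<bar> \<le> int n \<longrightarrow> y i = x i) \<longrightarrow> x \<in> X)"

definition shift_invariant :: "biword set \<Rightarrow> bool" where
  "shift_invariant X \<longleftrightarrow> shift ` X = X"

definition shift_space :: "biword set \<Rightarrow> bool" where
  "shift_space X \<longleftrightarrow> closed_set X \<and> shift_invariant X \<and>
     (\<forall>a. \<exists>x\<in>X. \<exists>i. x i = a)"

definition minimal_shift :: "biword set \<Rightarrow> bool" where
  "minimal_shift X \<longleftrightarrow> shift_space X \<and>
     (\<forall>Y. Y \<subseteq> X \<longrightarrow> closed_set Y \<longrightarrow> shift_invariant Y \<longrightarrow> Y = {} \<or> Y = X)"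

text \<open>A finite simple undirected graph given by vertex set V and a symmetric edge predicate E.\<close>
definition graph_connected :: "'v set \<Rightarrow> ('v \<Rightarrow> 'v \<Rightarrow> bool) \<Rightarrow> bool" where
  "graph_connected V E \<longleftrightarrow>
     (\<forall>u\<in>V. \<forall>v\<in>V. (\<lambda>a b. a \<in> V \<and> b \<in> V \<and> E a b)\<^sup>*\<^sup>* u v)"

definition graph_acyclic :: "'v set \<Rightarrow> ('v \<Rightarrow> 'v \<Rightarrow> bool) \<Rightarrow> bool" where
  "graph_acyclic V E \<longleftrightarrow>
     \<not> (\<exists>vs. length vs \<ge> 3 \<and> distinct vs \<and> set vs \<subseteq> V \<and>
            (\<forall>i. Suc i < length vs \<longrightarrow> E (vs ! i) (vs ! Suc i)) \<and>
            E (last vs) (hd vs))"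

definition is_tree :: "'v set \<Rightarrow> ('v \<Rightarrow> 'v \<Rightarrow> bool) \<Rightarrow> bool" where
  "is_tree V E \<longleftrightarrow> graph_connected V E \<and> graph_acyclic V E"

text \<open>Extension graph of w: left copies Inl a, right copies Inr b.\<close>
definition ext_vertices :: "biword set \<Rightarrow> letter list \<Rightarrow> (letter + letter) set" where
  "ext_vertices X w = Inl ` {a. a # w \<in> lang X} \<union> Inr ` {b. w @ [b] \<in> lang X}"

definition ext_edge :: "biword set \<Rightarrow> letter list \<Rightarrow> (letter + letter) \<Rightarrow> (letter + letter) \<Rightarrow> bool" where
  "ext_edge X w u v \<longleftrightarrow>
     (\<exists>a b. ((u = Inl a \<and> v = Inr b) \<or> (u = Inr b \<and> v = Inl a)) \<and> a # w @ [b] \<in> lang X)"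

definition dendric :: "biword set \<Rightarrow> bool" where
  "dendric X \<longleftrightarrow> (\<forall>w \<in> lang X. is_tree (ext_vertices X w) (ext_edge X w))"

definition has_letter_freqs :: "biword set \<Rightarrow> (letter \<Rightarrow> real) \<Rightarrow> bool" where
  "has_letter_freqs X lam \<longleftrightarrow>
     (\<forall>x\<in>X. \<forall>a. (\<lambda>n. real (card {i \<in> {1..int n}. x i = a}) / real n) \<longlonglongrightarrow> lam a)"

section \<open>S-adic representations (sequences indexed from 1; index 0 is unused)\<close>

definition primitive_seq :: "(nat \<Rightarrow> morph) \<Rightarrow> bool" where
  "primitive_seq sig \<longleftrightarrow>
     (\<forall>n\<ge>1. \<exists>N>n. \<forall>a b. a \<in> set (comps sig n (N - n) b))"

definition represents :: "(nat \<Rightarrow> morph) \<Rightarrow> biword set \<Rightarrow> bool" where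
  "represents sig X \<longleftrightarrow>
     X = {x. \<forall>i n. \<exists>N\<ge>1. \<exists>a u v. comps sig 1 (N - 1) a = u @ factor_at x i n @ v}"

definition SSS_adic :: "(nat \<Rightarrow> morph) \<Rightarrow> bool" where
  "SSS_adic sig \<longleftrightarrow>
     (\<forall>n\<ge>1. \<exists>p\<in>Sigma3. \<exists>s\<in>S3. \<exists>p'\<in>Sigma3. sig n = mcomp p (mcomp s p'))"

end

theory Submission
  imports Defs
begin

(* Every image of sig 1 begins with a marker letter s that occurs nowhere else in it, and sig 1
   is injective.  As X is generated by the directive sequence, every x in X is a concatenation of
   blocks sig 1 c, each followed by s, and this decomposition is unique.  So for a weight g on
   letters the partial sums of g along x are, up to a bounded error, sums of the g-weights of the
   images sig 1 c of the blocks.  If all these weights are nonnegative and the one of sig 1 b is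
   positive, the partial sums grow linearly, because primitivity makes the b-blocks occur with
   bounded gaps; hence the frequency average of g is positive.  Suitable weights give the
   inequalities of the region attached to each of the five possible first morphisms, and these
   regions are pairwise disjoint, which turns the implications into equivalences. *)

lemma UNIV_letter: "(UNIV :: letter set) = {L1, L2, L3}"
  using letter.exhaust by auto

lemma all_letter: "(\<forall>c. P c) \<longleftrightarrow> P L1 \<and> P L2 \<and> P L3"
  by (metis letter.exhaust)

lemma sum_UNIV_letter: "(\<Sum>a\<in>UNIV. f a) = f L1 + f L2 + f L3"
  by (simp add: UNIV_letter add.assoc)

lemma inj_letter: "inj f \<longleftrightarrow> f L1 \<noteq> f L2 \<and> f L1 \<noteq> f L3 \<and> f L2 \<noteq> f L3"
  unfolding inj_def by (metis letter.exhaust letter.distinct)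

instance letter :: finite
  by standard (simp add: UNIV_letter)

lemma morph_word_Nil [simp]: "morph_word s [] = []"
  and morph_word_Cons [simp]: "morph_word s (a # v) = s a @ morph_word s v"
  and morph_word_append [simp]: "morph_word s (u @ v) = morph_word s u @ morph_word s v"
  by (simp_all add: morph_word_def)

lemma morph_word_mcomp: "morph_word (mcomp s t) w = morph_word s (morph_word t w)"
  by (induction w) (simp_all add: mcomp_def)

lemma morph_word_mid [simp]: "morph_word mid w = w"
  by (induction w) (simp_all add: mid_def)

lemma mcomp_mid [simp]: "mcomp s mid = s"
  by (simp add: mcomp_def mid_def)

lemma comps_add: "comps sig n (k + m) a = morph_word (comps sig n k) (comps sig (n + k) m a)"
  by (induction k arbitrary: n) (simp_all add: mcomp_def morph_word_mcomp[unfolded mcomp_def])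

lemma morph_word_split_at:
  assumes "q < length (morph_word f v)"
  shows "\<exists>us c vs. v = us @ c # vs \<and> length (morph_word f us) \<le> q
           \<and> q < length (morph_word f us) + length (f c)"
  using assms
proof (induction v arbitrary: q)
  case (Cons a v)
  show ?case
  proof (cases "q < length (f a)")
    case True
    then show ?thesis by (rule_tac x="[]" in exI) auto
  next
    case False
    with Cons.prems have "q - length (f a) < length (morph_word f v)" by simp
    then obtain us c vs where
      "v = us @ c # vs" "length (morph_word f us) \<le> q - length (f a)"
      "q - length (f a) < length (morph_word f us) + length (f c)"
      using Cons.IH by blast
    with False show ?thesis by (rule_tac x="a # us" in exI) auto
  qed
qed simp

section \<open>Occurrences and desubstitution\<close>

lemma length_factor_at [simp]: "length (factor_at x p n) = n"
  by (simp add: factor_at_def)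

definition occurs_at :: "biword \<Rightarrow> letter list \<Rightarrow> int \<Rightarrow> bool" where
  "occurs_at x w p \<longleftrightarrow> factor_at x p (length w) = w"

lemma occurs_at_iff: "occurs_at x w p \<longleftrightarrow> (\<forall>t < length w. x (p + int t) = w ! t)"
  unfolding occurs_at_def factor_at_def list_eq_iff_nth_eq by simp

lemma occurs_at_factor_at: "occurs_at x (factor_at x p n) p"
  by (simp add: occurs_at_iff factor_at_def)

lemma occurs_at_infix:
  assumes "occurs_at x (u @ w @ v) p"
  shows "occurs_at x w (p + int (length u))"
  unfolding occurs_at_iff
proof (intro allI impI)
  fix t assume "t < length w"
  then show "x (p + int (length u) + int t) = w ! t"
    using assms[unfolded occurs_at_iff, rule_format, of "length u + t"]
    by (simp add: nth_append algebra_simps)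
qed

lemma occurs_at_overlap:
  assumes "occurs_at x u p" and "A @ u @ C = P @ w @ R"
    and "length A \<le> length P" and "length P + length w \<le> length A + length u"
  shows "occurs_at x w (p + int (length P - length A))"
  unfolding occurs_at_iff
proof (intro allI impI)
  fix t assume t: "t < length w"
  have idx: "length P - length A + t < length u" using assms(3,4) t by linarith
  have "w ! t = (P @ w @ R) ! (length P + t)" using t by (simp add: nth_append)
  also have "\<dots> = (A @ u @ C) ! (length A + (length P - length A + t))"
    using assms(2,3) by simp
  also have "\<dots> = u ! (length P - length A + t)"
    using idx by (simp only: nth_append_length_plus nth_append_left)
  also have "\<dots> = x (p + int (length P - length A + t))"
    using assms(1)[unfolded occurs_at_iff, rule_format, OF idx] by (rule sym)
  finally show "x (p + int (length P - length A) + int t) = w ! t" by (simp add: algebra_simps)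
qed

lemma represents_long_factor:
  assumes "represents sig X" and "x \<in> X"
  obtains L where "\<And>i n. L \<le> n \<Longrightarrow> \<exists>v A C. morph_word (comps sig 1 m) v = A @ factor_at x i n @ C"
proof
  define L where "L = Suc (Max ((\<lambda>(k, a). length (comps sig 1 k a)) ` ({..<m} \<times> UNIV)))"
  have short: "length (comps sig 1 k a) < L" if "k < m" for k a
    unfolding L_def using that by (intro le_imp_less_Suc Max_ge) auto
  fix i n assume "L \<le> n"
  obtain N a A C where "comps sig 1 (N - 1) a = A @ factor_at x i n @ C"
    using assms unfolding represents_def by blast
  moreover from this have "m \<le> N - 1"
    using short[of "N - 1" a] \<open>L \<le> n\<close> by (cases "m \<le> N - 1") auto
  then obtain r where "N - 1 = m + r" using le_iff_add by blast
  ultimately have "morph_word (comps sig 1 m) (comps sig (1 + m) r a) = A @ factor_at x i n @ C"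
    by (simp only: comps_add)
  then show "\<exists>v A C. morph_word (comps sig 1 m) v = A @ factor_at x i n @ C" by blast
qed

lemma represents_desubstitution:
  fixes m :: nat
  assumes "represents sig X" and "x \<in> X"
  defines "\<beta> \<equiv> comps sig 1 m"
  shows "\<exists>c e j. j < length (\<beta> c) \<and> occurs_at x (\<beta> c @ \<beta> e) (i - int j)"
proof -
  define M where "M = Max (range (\<lambda>c. length (\<beta> c)))"
  have long: "length (\<beta> c) \<le> M" for c
    unfolding M_def by (rule Max_ge) auto
  obtain L where L: "\<And>i n. L \<le> n \<Longrightarrow> \<exists>v A C. morph_word \<beta> v = A @ factor_at x i n @ C"
    using represents_long_factor[OF assms(1,2)] unfolding \<beta>_def by blast
  define n where "n = max L (3 * M + 1)"
  obtain v A C where v: "morph_word \<beta> v = A @ factor_at x (i - int M) n @ C"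
    using L[of n "i - int M"] unfolding n_def by auto
  define q where "q = length A + M"
  have "q < length (morph_word \<beta> v)" using v by (simp add: q_def n_def)
  then obtain us c vs where split: "v = us @ c # vs" "length (morph_word \<beta> us) \<le> q"
    "q < length (morph_word \<beta> us) + length (\<beta> c)"
    using morph_word_split_at by blast
  define p where "p = length (morph_word \<beta> us)"
  have "vs \<noteq> []"
  proof
    assume "vs = []"
    then have "length (morph_word \<beta> v) \<le> q + M" using split long[of c] by simp
    then show False using v by (simp add: q_def n_def)
  qed
  then obtain e vs' where "vs = e # vs'" by (cases vs) auto
  then have "A @ factor_at x (i - int M) n @ C = morph_word \<beta> us @ (\<beta> c @ \<beta> e) @ morph_word \<beta> vs'"
    using v split(1) by simp
  moreover have "length A \<le> p" "p + length (\<beta> c @ \<beta> e) \<le> length A + n"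
    using split(2,3) long[of c] long[of e] by (auto simp: p_def q_def n_def)
  ultimately have "occurs_at x (\<beta> c @ \<beta> e) (i - int M + int (p - length A))"
    unfolding p_def by (intro occurs_at_overlap[OF occurs_at_factor_at]) simp_all
  moreover have "i - int M + int (p - length A) = i - int (q - p)" "q - p < length (\<beta> c)"
    using split(2,3) \<open>length A \<le> p\<close> by (auto simp: p_def q_def)
  ultimately show ?thesis by auto
qed

lemma first_morphism_parse:
  assumes "represents sig X" and "x \<in> X" and "\<forall>c. \<exists>w. sig 1 c = s # w"
  shows "\<exists>c j. j < length (sig 1 c) \<and> occurs_at x (sig 1 c @ [s]) (i - int j)"
proof -
  obtain c e j where "j < length (sig 1 c)" and occ: "occurs_at x (sig 1 c @ sig 1 e) (i - int j)"
    using represents_desubstitution[OF assms(1,2), of 1 i] by auto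
  moreover obtain w where "sig 1 e = s # w" using assms(3) by blast
  ultimately show ?thesis
    using occurs_at_infix[of x "[]" "sig 1 c @ [s]" w] by auto
qed

definition syndetic :: "(int \<Rightarrow> bool) \<Rightarrow> bool" where
  "syndetic P \<longleftrightarrow> (\<exists>K. \<forall>j. \<exists>t<K. P (j + int t))"

lemma primitive_blocks_contain_image:
  assumes all: "\<forall>a c. a \<in> set (comps sig 2 k c)" and s: "\<forall>c. \<exists>w. sig 1 c = s # w"
  defines "\<beta> \<equiv> comps sig 1 (Suc k)"
  shows "\<exists>U V. \<beta> c @ \<beta> e = U @ (sig 1 b @ [s]) @ V \<and> length U < length (\<beta> c)"
proof -
  have \<beta>: "\<beta> a = morph_word (sig 1) (comps sig 2 k a)" for a
    by (simp add: \<beta>_def mcomp_def numeral_2_eq_2)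
  obtain w1 w2 where c: "comps sig 2 k c = w1 @ b # w2"
    using all split_list by metis
  obtain d w3 where d: "w2 @ comps sig 2 k e = d # w3"
    using all by (metis append_is_Nil_conv empty_iff list.exhaust list.set(1))
  obtain r where r: "sig 1 d = s # r" using s by blast
  have "\<beta> c @ \<beta> e = morph_word (sig 1) w1 @ (sig 1 b @ [s]) @ (r @ morph_word (sig 1) w3)"
    using \<beta>[of c] \<beta>[of e] c arg_cong[OF d, of "morph_word (sig 1)"] r by simp
  moreover have "length (morph_word (sig 1) w1) < length (\<beta> c)"
    using \<beta>[of c] c spec[OF s, of b] by auto
  ultimately show ?thesis by blast
qed

lemma first_morphism_syndetic:
  assumes "represents sig X" and "x \<in> X" and "primitive_seq sig"
    and s: "\<forall>c. \<exists>w. sig 1 c = s # w"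
  shows "syndetic (occurs_at x (sig 1 b @ [s]))"
proof -
  obtain N where "N > 2" and all: "\<forall>a c. a \<in> set (comps sig 2 (N - 2) c)"
    using assms(3) unfolding primitive_seq_def by (metis one_le_numeral)
  define \<beta> where "\<beta> = comps sig 1 (N - 1)"
  have "N - 1 = Suc (N - 2)" using \<open>N > 2\<close> by simp
  then have inside: "\<exists>U V. \<beta> c @ \<beta> e = U @ (sig 1 b @ [s]) @ V \<and> length U < length (\<beta> c)" for c e
    unfolding \<beta>_def using primitive_blocks_contain_image[OF all s] by metis
  define M where "M = Max (range (\<lambda>c. length (\<beta> c)))"
  have long: "length (\<beta> c) \<le> M" for c
    unfolding M_def by (rule Max_ge) auto
  have "\<exists>t<2 * M. occurs_at x (sig 1 b @ [s]) (j + int t)" for j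
  proof -
    obtain c e i where i: "i < length (\<beta> c)" and occ: "occurs_at x (\<beta> c @ \<beta> e) (j + int M - int i)"
      using represents_desubstitution[OF assms(1,2), of "N - 1" "j + int M"] unfolding \<beta>_def by blast
    obtain U V where UV: "\<beta> c @ \<beta> e = U @ (sig 1 b @ [s]) @ V" "length U < length (\<beta> c)"
      using inside by blast
    have "occurs_at x (sig 1 b @ [s]) (j + int M - int i + int (length U))"
      using occurs_at_infix occ UV(1) by metis
    moreover have "j + int M - int i + int (length U) = j + int (M - i + length U)"
      using i long[of c] by simp
    moreover have "M - i + length U < 2 * M" using i UV(2) long[of c] by linarith
    ultimately show ?thesis by metis
  qed
  then show ?thesis unfolding syndetic_def by blast
qed

section \<open>Unique parsing and letter frequencies\<close>

definition marked_code :: "morph \<Rightarrow> letter \<Rightarrow> bool" where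
  "marked_code \<tau> s \<longleftrightarrow> inj \<tau> \<and> (\<forall>c. \<exists>w. \<tau> c = s # w \<and> s \<notin> set w)"

lemma marked_occurrence_marker_iff:
  assumes "marked_code \<tau> s" and "occurs_at x (\<tau> c @ [s]) p" and "t \<le> length (\<tau> c)"
  shows "x (p + int t) = s \<longleftrightarrow> t = 0 \<or> t = length (\<tau> c)"
proof -
  obtain w where w: "\<tau> c = s # w" "s \<notin> set w"
    using assms(1) unfolding marked_code_def by blast
  have "x (p + int t) = (s # w @ [s]) ! t"
    using assms(2,3) w(1) unfolding occurs_at_iff by simp
  then show ?thesis
    using w assms(3) nth_mem[of _ w] by (auto simp: nth_Cons nth_append split: nat.splits)
qed

lemma marked_occurrence_unique:
  assumes code: "marked_code \<tau> s"
    and occ: "occurs_at x (\<tau> c @ [s]) p" "p \<le> i" "i < p + int (length (\<tau> c))"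
    and occ': "occurs_at x (\<tau> c' @ [s]) p'" "p' \<le> i" "i < p' + int (length (\<tau> c'))"
  shows "c = c' \<and> p = p'"
proof -
  have no_later_start: "\<not> q < q'"
    if "occurs_at x (\<tau> d @ [s]) q" "occurs_at x (\<tau> d' @ [s]) q'" "q' \<le> i" "i < q + int (length (\<tau> d))"
    for d d' q q'
  proof
    assume "q < q'"
    then have "q' = q + int (nat (q' - q))" "0 < nat (q' - q)" "nat (q' - q) < length (\<tau> d)"
      using that(3,4) by auto
    moreover have "x q' = s" using marked_occurrence_marker_iff[OF code that(2), of 0] by simp
    ultimately show False
      using marked_occurrence_marker_iff[OF code that(1), of "nat (q' - q)"] by auto
  qed
  have "p = p'"
    using no_later_start[OF occ(1) occ'(1,2) occ(3)] no_later_start[OF occ'(1) occ(1,2) occ'(3)]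
    by linarith
  have no_shorter: "\<not> length (\<tau> d) < length (\<tau> d')"
    if "occurs_at x (\<tau> d @ [s]) p" "occurs_at x (\<tau> d' @ [s]) p" for d d'
  proof
    assume less: "length (\<tau> d) < length (\<tau> d')"
    have "\<tau> d \<noteq> []" using code unfolding marked_code_def by (metis list.distinct(1))
    then show False
      using marked_occurrence_marker_iff[OF code that(1), of "length (\<tau> d)"]
        marked_occurrence_marker_iff[OF code that(2), of "length (\<tau> d)"] less
      by simp
  qed
  have "length (\<tau> c) = length (\<tau> c')"
    using no_shorter[OF occ(1) occ'(1)[folded \<open>p = p'\<close>]]
      no_shorter[OF occ'(1)[folded \<open>p = p'\<close>] occ(1)] by linarith
  then have "\<tau> c @ [s] = \<tau> c' @ [s]"
    using occ(1) occ'(1) \<open>p = p'\<close> unfolding occurs_at_def by (metis length_append_singleton)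
  then show ?thesis
    using code \<open>p = p'\<close> unfolding marked_code_def by (simp add: inj_eq)
qed

lemma marked_code_letter_decomposition:
  fixes g :: "letter \<Rightarrow> 'a::semiring_1"
  assumes code: "marked_code \<tau> s"
    and parse: "\<exists>c j. j < length (\<tau> c) \<and> occurs_at x (\<tau> c @ [s]) (i - int j)"
  shows "g (x i) = (\<Sum>c\<in>UNIV. \<Sum>j<length (\<tau> c). g (\<tau> c ! j) * of_bool (occurs_at x (\<tau> c @ [s]) (i - int j)))"
proof -
  obtain c0 j0 where j0: "j0 < length (\<tau> c0)" and occ0: "occurs_at x (\<tau> c0 @ [s]) (i - int j0)"
    using parse by blast
  have only: "c = c0 \<and> j = j0" if "j < length (\<tau> c)" "occurs_at x (\<tau> c @ [s]) (i - int j)" for c j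
    using marked_occurrence_unique[OF code that(2) _ _ occ0, where i = i] that(1) j0 by auto
  have "(\<Sum>j<length (\<tau> c). g (\<tau> c ! j) * of_bool (occurs_at x (\<tau> c @ [s]) (i - int j)))
      = (if c = c0 then g (\<tau> c0 ! j0) else 0)" for c
  proof -
    have "(\<Sum>j<length (\<tau> c). g (\<tau> c ! j) * of_bool (occurs_at x (\<tau> c @ [s]) (i - int j)))
        = (\<Sum>j<length (\<tau> c). if c = c0 \<and> j = j0 then g (\<tau> c0 ! j0) else 0)"
      by (rule sum.cong) (auto dest: only intro: occ0)
    then show ?thesis using j0 by (simp add: sum.delta)
  qed
  moreover have "x i = \<tau> c0 ! j0"
    using occ0 j0 unfolding occurs_at_iff by (auto simp: nth_append dest: spec[of _ j0])
  ultimately show ?thesis by simp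
qed

lemma sum_shift_bound:
  fixes F :: "int \<Rightarrow> real"
  assumes "\<And>i. 0 \<le> F i" and "\<And>i. F i \<le> 1"
  shows "\<bar>(\<Sum>i\<in>{1..int n}. F (i - int j)) - (\<Sum>i\<in>{1..int n}. F i)\<bar> \<le> real j"
proof (induction j)
  case (Suc j)
  have telescope: "(\<Sum>i\<in>{1..int n}. G (i - 1) - G i) = G 0 - G (int n)" for G :: "int \<Rightarrow> real"
    by (induction n) (simp_all add: atLeastAtMostPlus1_int_conv add.commute)
  have "(\<Sum>i\<in>{1..int n}. F (i - int (Suc j))) - (\<Sum>i\<in>{1..int n}. F (i - int j))
      = F (- int j) - F (int n - int j)"
    using telescope[of "\<lambda>i. F (i - int j)"] by (simp add: sum_subtractf algebra_simps)
  then show ?case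
    using Suc.IH assms[of "- int j"] assms[of "int n - int j"] by linarith
qed simp

lemma syndetic_sum_lower_bound:
  assumes "syndetic P"
  obtains c :: real where "0 < c" and "\<And>n. c * real n - 1 \<le> (\<Sum>i\<in>{1..int n}. of_bool (P i))"
proof -
  obtain K where K: "\<forall>j. \<exists>t<K. P (j + int t)"
    using assms unfolding syndetic_def by blast
  then have "0 < K" by (metis gr_zeroI not_less0)
  have window: "1 \<le> (\<Sum>i\<in>{j + 1..j + int K}. of_bool (P i) :: real)" for j
  proof -
    obtain t where "t < K" "P (j + 1 + int t)" using K by blast
    then have "of_bool (P (j + 1 + int t)) \<le> (\<Sum>i\<in>{j + 1..j + int K}. of_bool (P i) :: real)"
      by (intro member_le_sum) auto
    with \<open>P (j + 1 + int t)\<close> show ?thesis by simp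
  qed
  have blocks: "real m \<le> (\<Sum>i\<in>{1..int (m * K)}. of_bool (P i))" for m
  proof (induction m)
    case (Suc m)
    have split: "{1..int (Suc m * K)} = {1..int (m * K)} \<union> {int (m * K) + 1..int (m * K) + int K}"
      by (auto simp del: of_nat_mult)
    have "(\<Sum>i\<in>{1..int (Suc m * K)}. of_bool (P i) :: real)
        = (\<Sum>i\<in>{1..int (m * K)}. of_bool (P i)) + (\<Sum>i\<in>{int (m * K) + 1..int (m * K) + int K}. of_bool (P i))"
      unfolding split by (rule sum.union_disjoint) auto
    then show ?case using Suc.IH window[of "int (m * K)"] by simp
  qed simp
  have "1 / real K * real n - 1 \<le> (\<Sum>i\<in>{1..int n}. of_bool (P i))" for n
  proof -
    have "n < n div K * K + K"
      using mod_less_divisor[OF \<open>0 < K\<close>, of n] div_mult_mod_eq[of n K] by linarith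
    then have "real n < real (n div K * K + K)" by (simp only: of_nat_less_iff)
    also have "\<dots> = (real (n div K) + 1) * real K" by (simp add: algebra_simps)
    finally have "real n / real K - 1 \<le> real (n div K)"
      using \<open>0 < K\<close> by (simp add: field_simps)
    also have "\<dots> \<le> (\<Sum>i\<in>{1..int (n div K * K)}. of_bool (P i))" by (rule blocks)
    also have "\<dots> \<le> (\<Sum>i\<in>{1..int n}. of_bool (P i))"
      using div_times_less_eq_dividend[of n K] by (intro sum_mono2) (auto simp del: of_nat_mult)
    finally show ?thesis by simp
  qed
  with \<open>0 < K\<close> show thesis by (intro that[of "1 / real K"]) auto
qed

lemma marked_code_partial_sum:
  fixes g :: "letter \<Rightarrow> 'a::semiring_1"
  assumes code: "marked_code \<tau> s"
    and parse: "\<forall>i. \<exists>c j. j < length (\<tau> c) \<and> occurs_at x (\<tau> c @ [s]) (i - int j)"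
  shows "(\<Sum>i\<in>I. g (x i))
    = (\<Sum>c\<in>UNIV. \<Sum>j<length (\<tau> c). g (\<tau> c ! j) * (\<Sum>i\<in>I. of_bool (occurs_at x (\<tau> c @ [s]) (i - int j))))"
proof -
  have "(\<Sum>i\<in>I. g (x i))
      = (\<Sum>i\<in>I. \<Sum>c\<in>UNIV. \<Sum>j<length (\<tau> c). g (\<tau> c ! j) * of_bool (occurs_at x (\<tau> c @ [s]) (i - int j)))"
    using parse by (intro sum.cong refl marked_code_letter_decomposition[OF code]) blast
  also have "\<dots> = (\<Sum>c\<in>UNIV. \<Sum>j<length (\<tau> c). \<Sum>i\<in>I. g (\<tau> c ! j) * of_bool (occurs_at x (\<tau> c @ [s]) (i - int j)))"
    by (subst sum.swap) (intro sum.cong refl sum.swap)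
  finally show ?thesis by (simp add: sum_distrib_left)
qed

lemma marked_code_partial_sum_lower_bound:
  fixes g :: "letter \<Rightarrow> real"
  assumes code: "marked_code \<tau> s"
    and parse: "\<forall>i. \<exists>c j. j < length (\<tau> c) \<and> occurs_at x (\<tau> c @ [s]) (i - int j)"
    and syndetic: "syndetic (occurs_at x (\<tau> b @ [s]))"
    and nonneg: "\<forall>c. 0 \<le> sum_list (map g (\<tau> c))" and pos: "0 < sum_list (map g (\<tau> b))"
  obtains c E where "0 < c" and "\<And>n. c * real n - E \<le> (\<Sum>i\<in>{1..int n}. g (x i))"
proof -
  define N where "N c j n = (\<Sum>i\<in>{1..int n}. of_bool (occurs_at x (\<tau> c @ [s]) (i - int j)) :: real)"
    for c j n
  define wt where "wt c = sum_list (map g (\<tau> c))" for c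
  have wt: "wt c = (\<Sum>j<length (\<tau> c). g (\<tau> c ! j))" for c
    unfolding wt_def by (simp add: sum_list_sum_nth atLeast0LessThan)
  define E0 where "E0 = (\<Sum>c\<in>UNIV. \<Sum>j<length (\<tau> c). \<bar>g (\<tau> c ! j)\<bar> * real j)"
  obtain c0 where c0: "0 < c0" "\<And>n. c0 * real n - 1 \<le> N b 0 n"
    using syndetic_sum_lower_bound[OF syndetic] unfolding N_def by auto
  have shift: "g (\<tau> c ! j) * N c 0 n - \<bar>g (\<tau> c ! j)\<bar> * real j \<le> g (\<tau> c ! j) * N c j n" for c j n
  proof -
    have "\<bar>N c j n - N c 0 n\<bar> \<le> real j"
      using sum_shift_bound[where F = "\<lambda>i. of_bool (occurs_at x (\<tau> c @ [s]) i)" and n = n and j = j] by (simp add: N_def)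
    then have "\<bar>g (\<tau> c ! j) * (N c j n - N c 0 n)\<bar> \<le> \<bar>g (\<tau> c ! j)\<bar> * real j"
      by (simp add: abs_mult mult_left_mono)
    then show ?thesis by (simp add: algebra_simps abs_le_iff)
  qed
  have "wt b * (c0 * real n - 1) - E0 \<le> (\<Sum>i\<in>{1..int n}. g (x i))" for n
  proof -
    have "wt b * (c0 * real n - 1) \<le> wt b * N b 0 n"
      using c0(2) pos by (simp add: wt_def)
    also have "\<dots> \<le> (\<Sum>c\<in>UNIV. wt c * N c 0 n)"
      using nonneg by (intro member_le_sum) (auto simp: wt_def N_def intro: sum_nonneg)
    also have "\<dots> - E0 = (\<Sum>c\<in>UNIV. \<Sum>j<length (\<tau> c). g (\<tau> c ! j) * N c 0 n - \<bar>g (\<tau> c ! j)\<bar> * real j)"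
      unfolding E0_def wt by (simp add: sum_subtractf sum_distrib_right)
    also have "\<dots> \<le> (\<Sum>c\<in>UNIV. \<Sum>j<length (\<tau> c). g (\<tau> c ! j) * N c j n)"
      by (intro sum_mono shift)
    also have "\<dots> = (\<Sum>i\<in>{1..int n}. g (x i))"
      unfolding N_def by (rule marked_code_partial_sum[OF code parse, symmetric])
    finally show ?thesis by simp
  qed
  then show thesis
    using pos c0(1) by (intro that[of "wt b * c0" "wt b + E0"]) (auto simp: wt_def algebra_simps)
qed

lemma weighted_frequency_tendsto:
  fixes x :: "int \<Rightarrow> 'a::finite" and g :: "'a \<Rightarrow> real"
  assumes freq: "\<forall>a. (\<lambda>n. real (card {i \<in> {1..int n}. x i = a}) / real n) \<longlonglongrightarrow> lam a"
  shows "(\<lambda>n. (\<Sum>i\<in>{1..int n}. g (x i)) / real n) \<longlonglongrightarrow> (\<Sum>a\<in>UNIV. g a * lam a)"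
proof -
  have "(\<Sum>i\<in>I. g (x i)) = (\<Sum>a\<in>UNIV. g a * real (card {i \<in> I. x i = a}))" if "finite I" for I
  proof -
    have "(\<Sum>i\<in>I. g (x i)) = (\<Sum>i\<in>I. \<Sum>a\<in>UNIV. if x i = a then g a else 0)"
      by (intro sum.cong refl) (simp add: sum.delta eq_commute)
    also have "\<dots> = (\<Sum>a\<in>UNIV. \<Sum>i\<in>I. if x i = a then g a else 0)" by (rule sum.swap)
    also have "\<dots> = (\<Sum>a\<in>UNIV. g a * real (card {i \<in> I. x i = a}))"
      using that by (simp add: sum.inter_filter[symmetric] mult.commute)
    finally show ?thesis .
  qed
  then have "(\<Sum>i\<in>{1..int n}. g (x i)) / real n
      = (\<Sum>a\<in>UNIV. g a * (real (card {i \<in> {1..int n}. x i = a}) / real n))" for n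
    by (simp add: sum_divide_distrib)
  moreover have "(\<lambda>n. \<Sum>a\<in>UNIV. g a * (real (card {i \<in> {1..int n}. x i = a}) / real n))
      \<longlonglongrightarrow> (\<Sum>a\<in>UNIV. g a * lam a)"
    using freq by (intro tendsto_sum tendsto_mult_left) auto
  ultimately show ?thesis by simp
qed

lemma linear_lower_bound_le_limit:
  fixes f :: "nat \<Rightarrow> real"
  assumes "(\<lambda>n. f n / real n) \<longlonglongrightarrow> L" and "\<And>n. c * real n - E \<le> f n"
  shows "c \<le> L"
proof (rule LIMSEQ_le[OF _ assms(1)])
  show "(\<lambda>n. c - E / real n) \<longlonglongrightarrow> c"
    using tendsto_diff[OF tendsto_const lim_const_over_n] by simp
  have "c - E / real n \<le> f n / real n" if "1 \<le> n" for n
  proof -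
    have "c - E / real n = (c * real n - E) / real n" using that by (simp add: field_simps)
    also have "\<dots> \<le> f n / real n" using assms(2) by (rule divide_right_mono) simp
    finally show ?thesis .
  qed
  then show "\<exists>N. \<forall>n\<ge>N. c - E / real n \<le> f n / real n" by blast
qed

lemma marked_code_weight_pos:
  fixes g :: "letter \<Rightarrow> real"
  assumes "marked_code \<tau> s"
    and "\<forall>i. \<exists>c j. j < length (\<tau> c) \<and> occurs_at x (\<tau> c @ [s]) (i - int j)"
    and "syndetic (occurs_at x (\<tau> b @ [s]))"
    and freq: "\<forall>a. (\<lambda>n. real (card {i \<in> {1..int n}. x i = a}) / real n) \<longlonglongrightarrow> lam a"
    and "\<forall>c. 0 \<le> sum_list (map g (\<tau> c))" and "0 < sum_list (map g (\<tau> b))"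
  shows "0 < (\<Sum>a\<in>UNIV. g a * lam a)"
proof -
  obtain c E where "0 < c" and "\<And>n. c * real n - E \<le> (\<Sum>i\<in>{1..int n}. g (x i))"
    using marked_code_partial_sum_lower_bound[OF assms(1-3,5,6)] by blast
  with linear_lower_bound_le_limit[OF weighted_frequency_tendsto[OF freq]] show ?thesis by force
qed

lemma first_morphism_weight_pos:
  fixes g :: "letter \<Rightarrow> real"
  assumes "represents sig X" and "primitive_seq sig" and "x \<in> X" and "has_letter_freqs X lam"
    and code: "marked_code (sig 1) s"
    and "\<forall>c. 0 \<le> sum_list (map g (sig 1 c))" and "0 < sum_list (map g (sig 1 b))"
  shows "0 < (\<Sum>a\<in>UNIV. g a * lam a)"
proof (rule marked_code_weight_pos[OF code])
  have starts: "\<forall>c. \<exists>w. sig 1 c = s # w" using code unfolding marked_code_def by blast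
  show "\<forall>i. \<exists>c j. j < length (sig 1 c) \<and> occurs_at x (sig 1 c @ [s]) (i - int j)"
    using first_morphism_parse[OF assms(1,3) starts] by blast
  show "syndetic (occurs_at x (sig 1 b @ [s]))"
    by (rule first_morphism_syndetic[OF assms(1,3,2) starts])
  show "\<forall>a. (\<lambda>n. real (card {i \<in> {1..int n}. x i = a}) / real n) \<longlonglongrightarrow> lam a"
    using assms(3,4) unfolding has_letter_freqs_def by blast
qed (use assms(6,7) in auto)

section \<open>The five first morphisms\<close>

lemma letter_freqs_nonneg:
  assumes "has_letter_freqs X lam" and "x \<in> X"
  shows "0 \<le> lam a"
proof (rule LIMSEQ_le_const)
  show "(\<lambda>n. real (card {i \<in> {1..int n}. x i = a}) / real n) \<longlonglongrightarrow> lam a"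
    using assms unfolding has_letter_freqs_def by blast
qed auto

datatype morph_kind = Alpha | Eta | Beta | Gamma | Delta nat

fun kind_morph :: "morph_kind \<Rightarrow> morph" where
  "kind_morph Alpha = alpha"
| "kind_morph Eta = mcomp (pi L1 L3 L2) (mcomp eta (pi L3 L2 L1))"
| "kind_morph Beta = mcomp (pi L3 L1 L2) (mcomp beta (pi L2 L1 L3))"
| "kind_morph Gamma = mcomp (pi L2 L1 L3) gamma"
| "kind_morph (Delta k) = mcomp (pi L2 L1 L3) (delta k)"

fun admissible_kind :: "morph_kind \<Rightarrow> bool" where
  "admissible_kind (Delta k) \<longleftrightarrow> 1 \<le> k"
| "admissible_kind _ \<longleftrightarrow> True"

fun kind_region :: "morph_kind \<Rightarrow> (letter \<Rightarrow> real) \<Rightarrow> bool" where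
  "kind_region Alpha lam \<longleftrightarrow> lam L1 > lam L2 + lam L3"
| "kind_region Eta lam \<longleftrightarrow> lam L2 < lam L1 \<and> lam L3 < lam L1 \<and> lam L1 < lam L2 + lam L3"
| "kind_region Beta lam \<longleftrightarrow> lam L2 < lam L1 \<and> lam L1 < lam L3"
| "kind_region Gamma lam \<longleftrightarrow> lam L3 < lam L1 \<and> lam L1 < lam L2"
| "kind_region (Delta k) lam \<longleftrightarrow> lam L1 < lam L2 \<and> lam L1 < lam L3 \<and>
     real k * lam L1 < lam L3 \<and> lam L3 < real (k + 1) * lam L1"

lemma kind_morph_explicit:
  "kind_morph Alpha = case_letter [L1] [L1, L2] [L1, L3]"
  "kind_morph Eta = case_letter [L1, L3, L2] [L1, L3] [L1, L2]"
  "kind_morph Beta = case_letter [L3, L1] [L3] [L3, L2, L1]"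
  "kind_morph Gamma = case_letter [L2] [L2, L1] [L2, L1, L3]"
  "kind_morph (Delta k) = case_letter [L2] (L2 # L1 # replicate k L3) (L2 # L1 # replicate (k + 1) L3)"
  by (rule ext, case_tac x;
      simp add: alpha_def beta_def gamma_def delta_def eta_def mcomp_def pi_def morph_word_def)+

lemma strictly_between_multiples_unique:
  fixes l y :: real
  assumes "real k * l < y" "y < real (k + 1) * l" "real k' * l < y" "y < real (k' + 1) * l"
  shows "k = k'"
proof -
  have "0 < l" using assms(1,2) by (simp add: algebra_simps)
  moreover have "real k * l < real (k' + 1) * l" "real k' * l < real (k + 1) * l"
    using assms by linarith+
  ultimately have "real k < real k' + 1" "real k' < real k + 1" by simp_all
  then show ?thesis by linarith
qed

lemma kind_region_unique:
  assumes "\<forall>a. 0 \<le> lam a" and "kind_region \<kappa> lam" and "kind_region \<kappa>' lam"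
  shows "\<kappa> = \<kappa>'"
  using assms spec[OF assms(1), of L2] spec[OF assms(1), of L3]
  by (cases \<kappa>; cases \<kappa>') (auto intro: strictly_between_multiples_unique)

lemma first_morphism_region:
  assumes "represents sig X" and "primitive_seq sig" and "x \<in> X" and "has_letter_freqs X lam"
    and "admissible_kind \<kappa>" and \<kappa>: "sig 1 = kind_morph \<kappa>"
  shows "kind_region \<kappa> lam"
proof -
  have pos: "0 < g L1 * lam L1 + g L2 * lam L2 + g L3 * lam L3"
    if "marked_code (kind_morph \<kappa>) s" "\<forall>c. 0 \<le> sum_list (map g (kind_morph \<kappa> c))"
      "0 < sum_list (map g (kind_morph \<kappa> b))"
    for s g b
    using first_morphism_weight_pos[OF assms(1-4) that[folded \<kappa>]] by (simp add: sum_UNIV_letter)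
  \<comment> \<open>each weight g below satisfies the hypotheses of pos, and its pairing with lam is one inequality of the region\<close>
  note code_simps = kind_morph_explicit marked_code_def inj_letter all_letter
  show ?thesis
  proof (cases \<kappa>)
    case Alpha
    then show ?thesis
      using pos[of L1 "case_letter 1 (-1) (-1)" L1] by (simp add: code_simps del: kind_morph.simps)
  next
    case Eta
    then show ?thesis
      using pos[of L1 "case_letter 1 (-1) 0" L2] pos[of L1 "case_letter 1 0 (-1)" L3]
        pos[of L1 "case_letter (-1) 1 1" L1]
      by (simp add: code_simps del: kind_morph.simps)
  next
    case Beta
    then show ?thesis
      using pos[of L3 "case_letter 1 (-1) 0" L1] pos[of L3 "case_letter (-1) 0 1" L2]
      by (simp add: code_simps del: kind_morph.simps)
  next
    case Gamma
    then show ?thesis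
      using pos[of L2 "case_letter 1 0 (-1)" L2] pos[of L2 "case_letter (-1) 1 0" L1]
      by (simp add: code_simps del: kind_morph.simps)
  next
    case (Delta k)
    with assms(5) have "1 \<le> k" by simp
    with Delta show ?thesis
      using pos[of L2 "case_letter (-1) 1 0" L1] pos[of L2 "case_letter (-1) 0 1" L3]
        pos[of L2 "case_letter (- real k) 0 1" L3] pos[of L2 "case_letter (real k + 1) 0 (-1)" L2]
      by (simp add: code_simps sum_list_replicate algebra_simps del: kind_morph.simps)
  qed
qed

theorem lemma6p8:
  fixes X :: "biword set" and sig :: "nat \<Rightarrow> morph" and lam :: "letter \<Rightarrow> real"
  assumes "minimal_shift X" and "dendric X"
    and "\<forall>n\<ge>1. non_erasing (sig n)"
    and "primitive_seq sig" and "SSS_adic sig" and "represents sig X"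
    and "has_letter_freqs X lam"
    and "sig 1 \<in> {alpha, mcomp (pi L1 L3 L2) (mcomp eta (pi L3 L2 L1)),
                  mcomp (pi L3 L1 L2) (mcomp beta (pi L2 L1 L3)),
                  mcomp (pi L2 L1 L3) gamma}
                 \<union> {mcomp (pi L2 L1 L3) (delta k) | k. k \<ge> 1}"
  shows "(lam L1 > lam L2 + lam L3 \<longleftrightarrow> sig 1 = alpha)
    \<and> ((lam L2 < lam L1 \<and> lam L3 < lam L1 \<and> lam L1 < lam L2 + lam L3) \<longleftrightarrow>
        sig 1 = mcomp (pi L1 L3 L2) (mcomp eta (pi L3 L2 L1)))
    \<and> ((lam L2 < lam L1 \<and> lam L1 < lam L3) \<longleftrightarrow>
        sig 1 = mcomp (pi L3 L1 L2) (mcomp beta (pi L2 L1 L3)))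
    \<and> ((lam L3 < lam L1 \<and> lam L1 < lam L2) \<longleftrightarrow> sig 1 = mcomp (pi L2 L1 L3) gamma)
    \<and> (\<forall>k\<ge>1. (lam L1 < lam L2 \<and> lam L1 < lam L3 \<and>
               real k * lam L1 < lam L3 \<and> lam L3 < real (k + 1) * lam L1) \<longleftrightarrow>
              sig 1 = mcomp (pi L2 L1 L3) (delta k))"
proof -
  obtain x where x: "x \<in> X"
    using assms(1) unfolding minimal_shift_def shift_space_def by blast
  have nonneg: "\<forall>a. 0 \<le> lam a"
    using letter_freqs_nonneg[OF assms(7) x] by blast
  obtain \<kappa>\<^sub>0 where \<kappa>\<^sub>0: "admissible_kind \<kappa>\<^sub>0" "sig 1 = kind_morph \<kappa>\<^sub>0"
    using assms(8) that[of Alpha] that[of Eta] that[of Beta] that[of Gamma] that[of "Delta _"] by auto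
  have region: "kind_region \<kappa> lam" if "admissible_kind \<kappa>" "sig 1 = kind_morph \<kappa>" for \<kappa>
    using first_morphism_region[OF assms(6,4) x assms(7) that] .
  have iff: "kind_region \<kappa> lam \<longleftrightarrow> sig 1 = kind_morph \<kappa>" if "admissible_kind \<kappa>" for \<kappa>
    using region[OF that] region[OF \<kappa>\<^sub>0] kind_region_unique[OF nonneg] \<kappa>\<^sub>0(2) by blast
  show ?thesis
    using iff[of Alpha] iff[of Eta] iff[of Beta] iff[of Gamma] iff[of "Delta _"] by auto
qed

end
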